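(* Let $H$ be a finite loopless graph with a marked vertex $v_0$ and $L$ a finite graph with at least $\deg_H(v_0)$ vertices. Let $G$ be obtained from $H$ by deleting $v_0$, adding a disjoint copy of $L$, and attaching each edge of $H$ formerly incident to $v_0$ to a vertex of $L$, distinct edges to distinct vertices. If every two bases of $M(H)$ intersect and every two bases of $M^\star(L)$ intersect, then every two bases of $M(G)$ intersect and every two bases of $M(G)^\star$ intersect.
   Context: $M(K)$ denotes the graphic (cycle) matroid of a graph $K$, whose bases are the edge sets of maximal spanning forests; $M^\star(K)$ is its dual. *)

theory Defs
  imports Main
begin

text \<open>Finite multigraphs: vertex set V, edge set E, and an incidence map giving
  for each edge its set of end vertices (one vertex for a loop, two otherwise).
  Parallel edges are allowed.\<close>

definition graph :: "'v set \<Rightarrow> 'e set \<Rightarrow> ('e \<Rightarrow> 'v set) \<Rightarrow> bool" where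
  "graph V E inc \<longleftrightarrow> finite V \<and> finite E \<and>
     (\<forall>e\<in>E. inc e \<subseteq> V \<and> inc e \<noteq> {} \<and> card (inc e) \<le> 2)"

definition loopless :: "'e set \<Rightarrow> ('e \<Rightarrow> 'v set) \<Rightarrow> bool" where
  "loopless E inc \<longleftrightarrow> (\<forall>e\<in>E. card (inc e) = 2)"

definition adj_rel :: "('e \<Rightarrow> 'v set) \<Rightarrow> 'e set \<Rightarrow> 'v rel" where
  "adj_rel inc F = {(x, y). \<exists>e\<in>F. x \<in> inc e \<and> y \<in> inc e}"

text \<open>F contains a cycle: some edge e of F is a loop, or its two ends are joined
  by a path in F - {e} (so e closes a cycle).\<close>
definition has_cycle :: "('e \<Rightarrow> 'v set) \<Rightarrow> 'e set \<Rightarrow> bool" where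
  "has_cycle inc F \<longleftrightarrow>
     (\<exists>e\<in>F. \<forall>u\<in>inc e. \<forall>w\<in>inc e. (u, w) \<in> (adj_rel inc (F - {e}))\<^sup>*)"

definition forest_edges :: "('e \<Rightarrow> 'v set) \<Rightarrow> 'e set \<Rightarrow> bool" where
  "forest_edges inc F \<longleftrightarrow> \<not> has_cycle inc F"

definition graphic_basis :: "'e set \<Rightarrow> ('e \<Rightarrow> 'v set) \<Rightarrow> 'e set \<Rightarrow> bool" where
  "graphic_basis E inc B \<longleftrightarrow> B \<subseteq> E \<and> forest_edges inc B \<and>
     (\<forall>B'. B \<subseteq> B' \<and> B' \<subseteq> E \<and> forest_edges inc B' \<longrightarrow> B' = B)"

definition cographic_basis :: "'e set \<Rightarrow> ('e \<Rightarrow> 'v set) \<Rightarrow> 'e set \<Rightarrow> bool" where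
  "cographic_basis E inc B \<longleftrightarrow> B \<subseteq> E \<and> graphic_basis E inc (E - B)"

definition bases_intersect :: "('e set \<Rightarrow> bool) \<Rightarrow> bool" where
  "bases_intersect P \<longleftrightarrow> (\<forall>B1 B2. P B1 \<longrightarrow> P B2 \<longrightarrow> B1 \<inter> B2 \<noteq> {})"

text \<open>The graph G: delete v0 from H, add a disjoint copy of L (vertices/edges tagged Inr),
  and reattach each edge e of H formerly incident to v0 at the vertex f e of L.\<close>
definition glue_verts :: "'v set \<Rightarrow> 'v \<Rightarrow> 'w set \<Rightarrow> ('v + 'w) set" where
  "glue_verts VH v0 VL = Inl ` (VH - {v0}) \<union> Inr ` VL"

definition glue_edges :: "'e set \<Rightarrow> 'f set \<Rightarrow> ('e + 'f) set" where
  "glue_edges EH EL = Inl ` EH \<union> Inr ` EL"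

definition glue_inc :: "('e \<Rightarrow> 'v set) \<Rightarrow> ('f \<Rightarrow> 'w set) \<Rightarrow> 'v \<Rightarrow> ('e \<Rightarrow> 'w)
    \<Rightarrow> ('e + 'f) \<Rightarrow> ('v + 'w) set" where
  "glue_inc incH incL v0 f x = (case x of
      Inl e \<Rightarrow> (\<lambda>u. if u = v0 then Inr (f e) else Inl u) ` incH e
    | Inr e \<Rightarrow> Inr ` incL e)"

end

theory Submission
  imports Defs
begin

text \<open>Contracting the copy of L back to the single vertex v0 maps G onto H. A basis of M(G)
  connects the ends of every edge of G, so its H-edges connect the ends of every edge of H and
  therefore contain a basis of M(H): two disjoint bases of M(G) would yield two disjoint bases
  of M(H). Dually, the L-edges of a basis of M(G) form a forest of L, which extends to a basis
  of M(L); hence the L-edges of every cobasis of M(G) contain a cobasis of M(L), and two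
  disjoint cobases of M(G) would yield two disjoint bases of M*(L).\<close>

text \<open>spans inc F e says that e lies in the closure of F in the cycle matroid.\<close>
definition spans :: "('e \<Rightarrow> 'v set) \<Rightarrow> 'e set \<Rightarrow> 'e \<Rightarrow> bool" where
  "spans inc F e \<longleftrightarrow> (\<forall>u\<in>inc e. \<forall>w\<in>inc e. (u, w) \<in> (adj_rel inc F)\<^sup>*)"

lemma has_cycle_iff_spans: "has_cycle inc F \<longleftrightarrow> (\<exists>e\<in>F. spans inc (F - {e}) e)"
  unfolding has_cycle_def spans_def ..

lemma adj_rel_mono: "F \<subseteq> F' \<Longrightarrow> adj_rel inc F \<subseteq> adj_rel inc F'"
  unfolding adj_rel_def by blast

lemma rtrancl_adj_rel_mono: "F \<subseteq> F' \<Longrightarrow> (adj_rel inc F)\<^sup>* \<subseteq> (adj_rel inc F')\<^sup>*"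
  by (intro rtrancl_mono adj_rel_mono)

lemma rtrancl_adj_rel_sym:
  assumes "(x, y) \<in> (adj_rel inc F)\<^sup>*"
  shows "(y, x) \<in> (adj_rel inc F)\<^sup>*"
proof -
  have "sym (adj_rel inc F)"
    unfolding adj_rel_def sym_def by blast
  then show ?thesis
    using assms by (metis sym_rtrancl symD)
qed

lemma spans_mono: "spans inc F e \<Longrightarrow> F \<subseteq> F' \<Longrightarrow> spans inc F' e"
  unfolding spans_def using rtrancl_adj_rel_mono by blast

lemma spans_trans:
  assumes "\<forall>d\<in>D. spans inc F d" and "spans inc D e"
  shows "spans inc F e"
proof -
  have "(adj_rel inc D)\<^sup>* \<subseteq> (adj_rel inc F)\<^sup>*"
    by (rule rtrancl_subset_rtrancl) (use assms(1) in \<open>auto simp: adj_rel_def spans_def\<close>)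
  then show ?thesis
    using assms(2) unfolding spans_def by blast
qed

lemma has_cycle_mono: "has_cycle inc F \<Longrightarrow> F \<subseteq> F' \<Longrightarrow> has_cycle inc F'"
  unfolding has_cycle_iff_spans by (meson Diff_mono order_refl spans_mono subsetD)

lemma forest_edges_subset: "forest_edges inc F' \<Longrightarrow> F \<subseteq> F' \<Longrightarrow> forest_edges inc F"
  unfolding forest_edges_def using has_cycle_mono by blast

lemma forest_edges_empty: "forest_edges inc {}"
  unfolding forest_edges_def has_cycle_def by blast

lemma graph_edge_subset: "graph V E inc \<Longrightarrow> D \<subseteq> E \<Longrightarrow> graph V D inc"
  unfolding graph_def by (meson finite_subset subset_iff)

lemma rtrancl_adj_rel_insert:
  assumes "(a, b) \<in> (adj_rel inc (insert e F))\<^sup>*"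
  shows "(a, b) \<in> (adj_rel inc F)\<^sup>* \<or>
    (\<exists>p\<in>inc e. \<exists>q\<in>inc e. (a, p) \<in> (adj_rel inc F)\<^sup>* \<and> (q, b) \<in> (adj_rel inc F)\<^sup>*)"
  using assms
proof (induction rule: rtrancl_induct)
  case base
  then show ?case by simp
next
  case (step b c)
  from step.hyps(2) obtain d where d: "d \<in> insert e F" "b \<in> inc d" "c \<in> inc d"
    unfolding adj_rel_def by blast
  show ?case
  proof (cases "d \<in> F")
    case True
    then have "(b, c) \<in> adj_rel inc F"
      using d unfolding adj_rel_def by blast
    then show ?thesis
      using step.IH by (meson rtrancl.rtrancl_into_rtrancl)
  next
    case False
    then show ?thesis
      using step.IH d by blast
  qed
qed

text \<open>The cycle of insert e B must pass through e, since B is a forest; removing e from it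
  leaves a path in B joining the two ends of e.\<close>
lemma forest_insert_has_cycle_spans:
  assumes ends: "finite (inc e)" "card (inc e) \<le> 2"
    and forest: "forest_edges inc B" and "e \<notin> B" and cycle: "has_cycle inc (insert e B)"
  shows "spans inc B e"
proof -
  obtain e' where e': "e' \<in> insert e B" "spans inc (insert e B - {e'}) e'"
    using cycle unfolding has_cycle_iff_spans by blast
  show ?thesis
  proof (cases "e' = e")
    case True
    then show ?thesis
      using e' \<open>e \<notin> B\<close> by simp
  next
    case False
    then have "e' \<in> B" and "insert e B - {e'} = insert e (B - {e'})"
      using e' by blast+
    let ?C = "(adj_rel inc (B - {e'}))\<^sup>*"
    obtain u' w' where uw': "u' \<in> inc e'" "w' \<in> inc e'" "(u', w') \<notin> ?C"
      using forest \<open>e' \<in> B\<close> unfolding forest_edges_def has_cycle_iff_spans spans_def by blast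
    have "spans inc (insert e (B - {e'})) e'"
      using e'(2) \<open>insert e B - {e'} = _\<close> by simp
    then have "(u', w') \<in> (adj_rel inc (insert e (B - {e'})))\<^sup>*"
      using uw'(1,2) unfolding spans_def by blast
    from rtrancl_adj_rel_insert[OF this] uw'(3)
    obtain p q where pq: "p \<in> inc e" "q \<in> inc e" "(u', p) \<in> ?C" "(q, w') \<in> ?C"
      by blast
    have "p \<noteq> q"
    proof
      assume "p = q"
      then have "(u', w') \<in> ?C"
        using rtrancl_trans[OF pq(3)] pq(4) by simp
      with uw'(3) show False
        by contradiction
    qed
    then have "card {p, q} = 2" and pq_e: "{p, q} \<subseteq> inc e"
      using pq(1,2) by simp_all
    then have inc_e: "inc e = {p, q}"
      using card_seteq[OF ends(1) pq_e] ends(2) by simp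
    have C_B: "?C \<subseteq> (adj_rel inc B)\<^sup>*"
      by (rule rtrancl_adj_rel_mono) blast
    have "(p, u') \<in> (adj_rel inc B)\<^sup>*" "(w', q) \<in> (adj_rel inc B)\<^sup>*"
      using rtrancl_adj_rel_sym[OF subsetD[OF C_B pq(3)]] rtrancl_adj_rel_sym[OF subsetD[OF C_B pq(4)]]
      by simp_all
    moreover have "(u', w') \<in> adj_rel inc B"
      using uw' \<open>e' \<in> B\<close> unfolding adj_rel_def by blast
    ultimately have "(p, q) \<in> (adj_rel inc B)\<^sup>*"
      by (meson r_into_rtrancl rtrancl_trans)
    moreover from this have "(q, p) \<in> (adj_rel inc B)\<^sup>*"
      by (rule rtrancl_adj_rel_sym)
    ultimately show ?thesis
      unfolding spans_def inc_e by auto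
  qed
qed

lemma graphic_basis_spans:
  assumes "graph V E inc" "graphic_basis E inc B" "e \<in> E"
  shows "spans inc B e"
proof (cases "e \<in> B")
  case True
  then have "(u, w) \<in> adj_rel inc B" if "u \<in> inc e" "w \<in> inc e" for u w
    using that unfolding adj_rel_def by blast
  then show ?thesis
    unfolding spans_def by (simp add: r_into_rtrancl)
next
  case False
  have "finite (inc e)" "card (inc e) \<le> 2"
    using assms(1,3) unfolding graph_def by (meson finite_subset)+
  moreover have "forest_edges inc B"
    using assms(2) unfolding graphic_basis_def by blast
  moreover have "has_cycle inc (insert e B)"
  proof -
    have "insert e B \<noteq> B" "insert e B \<subseteq> E"
      using False assms(2,3) unfolding graphic_basis_def by auto
    then show ?thesis
      using assms(2) unfolding graphic_basis_def forest_edges_def by blast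
  qed
  ultimately show ?thesis
    using False by (intro forest_insert_has_cycle_spans)
qed

lemma forest_extends_to_graphic_basis:
  assumes "finite E" "F \<subseteq> E" "forest_edges inc F"
  shows "\<exists>B. F \<subseteq> B \<and> graphic_basis E inc B"
proof -
  let ?S = "{B. F \<subseteq> B \<and> B \<subseteq> E \<and> forest_edges inc B}"
  have "?S \<subseteq> Pow E"
    by blast
  then have "finite ?S"
    using assms(1) by (metis finite_Pow_iff finite_subset)
  moreover have "F \<in> ?S"
    using assms by blast
  ultimately obtain M where M: "M \<in> ?S" "\<forall>B\<in>?S. M \<subseteq> B \<longrightarrow> M = B"
    using finite_has_maximal[of ?S] by blast
  then have "graphic_basis E inc M"
    unfolding graphic_basis_def by blast
  then show ?thesis
    using M(1) by blast
qed

lemma graphic_basis_within_spanning_set: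
  assumes graph: "graph V E inc" and "D \<subseteq> E" and spanning: "\<forall>e\<in>E. spans inc D e"
  shows "\<exists>B. B \<subseteq> D \<and> graphic_basis E inc B"
proof -
  have "finite D"
    using graph \<open>D \<subseteq> E\<close> unfolding graph_def by (meson finite_subset)
  then obtain B where B: "graphic_basis D inc B"
    using forest_extends_to_graphic_basis[OF _ empty_subsetI forest_edges_empty] by auto
  have "\<forall>d\<in>D. spans inc B d"
    using graphic_basis_spans[OF graph_edge_subset[OF graph \<open>D \<subseteq> E\<close>] B] by blast
  then have B_spans: "spans inc B e" if "e \<in> E" for e
    using spanning that by (blast intro: spans_trans)
  have "B \<subseteq> D" "forest_edges inc B"
    using B unfolding graphic_basis_def by auto
  moreover have "graphic_basis E inc B"
    unfolding graphic_basis_def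
  proof (intro conjI allI impI)
    show "B \<subseteq> E" "forest_edges inc B"
      using \<open>B \<subseteq> D\<close> \<open>D \<subseteq> E\<close> \<open>forest_edges inc B\<close> by auto
  next
    fix B'
    assume B': "B \<subseteq> B' \<and> B' \<subseteq> E \<and> forest_edges inc B'"
    show "B' = B"
    proof (rule ccontr)
      assume "B' \<noteq> B"
      then obtain e where e: "e \<in> B'" "e \<notin> B"
        using B' by blast
      have "spans inc B e"
        using B_spans e(1) B' by blast
      moreover have "B \<subseteq> B' - {e}"
        using B' e(2) by blast
      ultimately have "spans inc (B' - {e}) e"
        by (rule spans_mono)
      then show False
        using e(1) B' unfolding forest_edges_def has_cycle_iff_spans by blast
    qed
  qed
  ultimately show ?thesis
    by blast
qed

lemma cographic_basis_Diff: "graphic_basis E inc B \<Longrightarrow> cographic_basis E inc (E - B)"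
  unfolding cographic_basis_def graphic_basis_def by (simp add: double_diff)

lemma bases_intersect_if_contains_preimage:
  assumes "bases_intersect Q" and "\<And>B. P B \<Longrightarrow> \<exists>B'. B' \<subseteq> g -` B \<and> Q B'"
  shows "bases_intersect P"
  unfolding bases_intersect_def
proof (intro allI impI)
  fix B1 B2
  assume "P B1" "P B2"
  then obtain B1' B2' where "B1' \<subseteq> g -` B1" "Q B1'" "B2' \<subseteq> g -` B2" "Q B2'"
    using assms(2) by meson
  then show "B1 \<inter> B2 \<noteq> {}"
    using assms(1) unfolding bases_intersect_def by blast
qed

lemma graph_glue:
  assumes "graph VH EH incH" and "graph VL EL incL" and "f ` {e \<in> EH. v0 \<in> incH e} \<subseteq> VL"
  shows "graph (glue_verts VH v0 VL) (glue_edges EH EL) (glue_inc incH incL v0 f)"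
  unfolding graph_def
proof (intro conjI)
  show "finite (glue_verts VH v0 VL)" "finite (glue_edges EH EL)"
    using assms(1,2) unfolding graph_def glue_verts_def glue_edges_def by auto
  show "\<forall>x\<in>glue_edges EH EL. glue_inc incH incL v0 f x \<subseteq> glue_verts VH v0 VL \<and>
      glue_inc incH incL v0 f x \<noteq> {} \<and> card (glue_inc incH incL v0 f x) \<le> 2"
  proof
    fix x
    assume "x \<in> glue_edges EH EL"
    then consider e where "e \<in> EH" "x = Inl e" | e where "e \<in> EL" "x = Inr e"
      unfolding glue_edges_def by blast
    then show "glue_inc incH incL v0 f x \<subseteq> glue_verts VH v0 VL \<and>
        glue_inc incH incL v0 f x \<noteq> {} \<and> card (glue_inc incH incL v0 f x) \<le> 2"
    proof cases
      case 1
      let ?lift = "\<lambda>u. if u = v0 then Inr (f e) else Inl u"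
      have inc_x: "glue_inc incH incL v0 f x = ?lift ` incH e"
        using 1 unfolding glue_inc_def by simp
      have ends: "incH e \<subseteq> VH" "incH e \<noteq> {}" "card (incH e) \<le> 2"
        using assms(1) 1 unfolding graph_def by auto
      then have "finite (incH e)"
        using assms(1) unfolding graph_def by (meson finite_subset)
      have "?lift u \<in> glue_verts VH v0 VL" if "u \<in> incH e" for u
        using assms(3) 1 ends(1) that unfolding glue_verts_def by auto
      moreover have "card (?lift ` incH e) \<le> 2"
        using card_image_le[OF \<open>finite (incH e)\<close>] ends(3) by (rule le_trans)
      ultimately show ?thesis
        unfolding inc_x using ends(2) by blast
    next
      case 2
      then show ?thesis
        using assms(2) unfolding graph_def glue_inc_def glue_verts_def
        by (auto simp: card_image)
    qed
  qed
qed

lemma rtrancl_adj_rel_glue_collapse: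
  assumes "(a, b) \<in> (adj_rel (glue_inc incH incL v0 f) B)\<^sup>*"
  shows "(case_sum id (\<lambda>_. v0) a, case_sum id (\<lambda>_. v0) b) \<in> (adj_rel incH (Inl -` B))\<^sup>*"
  using assms
proof (induction rule: rtrancl_induct)
  case base
  then show ?case by simp
next
  case (step b c)
  let ?collapse = "case_sum id (\<lambda>_. v0)"
  from step.hyps(2) obtain x where x: "x \<in> B"
      "b \<in> glue_inc incH incL v0 f x" "c \<in> glue_inc incH incL v0 f x"
    unfolding adj_rel_def by blast
  have "(?collapse b, ?collapse c) \<in> (adj_rel incH (Inl -` B))\<^sup>*"
  proof (cases x)
    case (Inl e)
    then have "?collapse b \<in> incH e" "?collapse c \<in> incH e"
      using x(2,3) unfolding glue_inc_def by auto
    then show ?thesis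
      using x(1) Inl unfolding adj_rel_def by blast
  next
    case (Inr e)
    then show ?thesis
      using x(2,3) unfolding glue_inc_def by auto
  qed
  then show ?case
    using step.IH by (rule rtrancl_trans[rotated])
qed

lemma rtrancl_adj_rel_glue_Inr:
  assumes "(u, w) \<in> (adj_rel incL F)\<^sup>*"
  shows "(Inr u, Inr w) \<in> (adj_rel (glue_inc incH incL v0 f) (Inr ` F))\<^sup>*"
  using assms
proof (induction rule: rtrancl_induct)
  case base
  then show ?case by simp
next
  case (step b c)
  then have "(Inr b, Inr c) \<in> adj_rel (glue_inc incH incL v0 f) (Inr ` F)"
    unfolding adj_rel_def glue_inc_def by force
  then show ?case
    using step.IH by (meson rtrancl.rtrancl_into_rtrancl)
qed

lemma spans_glue_Inr:
  assumes "spans incL F e"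
  shows "spans (glue_inc incH incL v0 f) (Inr ` F) (Inr e)"
  unfolding spans_def
proof (intro ballI)
  fix a b
  assume "a \<in> glue_inc incH incL v0 f (Inr e)" "b \<in> glue_inc incH incL v0 f (Inr e)"
  then obtain u w where "a = Inr u" "b = Inr w" "u \<in> incL e" "w \<in> incL e"
    unfolding glue_inc_def by auto
  then show "(a, b) \<in> (adj_rel (glue_inc incH incL v0 f) (Inr ` F))\<^sup>*"
    using assms rtrancl_adj_rel_glue_Inr unfolding spans_def by metis
qed

lemma has_cycle_glue_Inr:
  assumes "has_cycle incL F"
  shows "has_cycle (glue_inc incH incL v0 f) (Inr ` F)"
proof -
  obtain e where "e \<in> F" "spans incL (F - {e}) e"
    using assms unfolding has_cycle_iff_spans by blast
  moreover have "Inr ` F - {Inr e} = Inr ` (F - {e})"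
    by auto
  ultimately have "spans (glue_inc incH incL v0 f) (Inr ` F - {Inr e}) (Inr e)"
    using spans_glue_Inr by metis
  then show ?thesis
    using \<open>e \<in> F\<close> unfolding has_cycle_iff_spans by blast
qed

lemma glue_graphic_basis_contains_graphic_basis:
  assumes H: "graph VH EH incH" and L: "graph VL EL incL"
    and f: "f ` {e \<in> EH. v0 \<in> incH e} \<subseteq> VL"
    and B: "graphic_basis (glue_edges EH EL) (glue_inc incH incL v0 f) B"
  shows "\<exists>B'. B' \<subseteq> Inl -` B \<and> graphic_basis EH incH B'"
proof (rule graphic_basis_within_spanning_set[OF H])
  show "Inl -` B \<subseteq> EH"
    using B unfolding graphic_basis_def glue_edges_def by auto
next
  show "\<forall>e\<in>EH. spans incH (Inl -` B) e"
    unfolding spans_def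
  proof (intro ballI)
    fix e u w
    assume "e \<in> EH" "u \<in> incH e" "w \<in> incH e"
    let ?lift = "\<lambda>u. if u = v0 then Inr (f e) else Inl u"
    have "spans (glue_inc incH incL v0 f) B (Inl e)"
      using graphic_basis_spans[OF graph_glue[OF H L f] B] \<open>e \<in> EH\<close>
      unfolding glue_edges_def by blast
    then have "(?lift u, ?lift w) \<in> (adj_rel (glue_inc incH incL v0 f) B)\<^sup>*"
      using \<open>u \<in> incH e\<close> \<open>w \<in> incH e\<close> unfolding spans_def glue_inc_def by auto
    from rtrancl_adj_rel_glue_collapse[OF this]
    show "(u, w) \<in> (adj_rel incH (Inl -` B))\<^sup>*"
      by (cases "u = v0"; cases "w = v0") auto
  qed
qed

lemma glue_cographic_basis_contains_cographic_basis:
  assumes L: "graph VL EL incL"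
    and C: "cographic_basis (glue_edges EH EL) (glue_inc incH incL v0 f) C"
  shows "\<exists>C'. C' \<subseteq> Inr -` C \<and> cographic_basis EL incL C'"
proof -
  let ?B = "glue_edges EH EL - C"
  have "forest_edges (glue_inc incH incL v0 f) ?B"
    using C unfolding cographic_basis_def graphic_basis_def by blast
  then have "forest_edges (glue_inc incH incL v0 f) (Inr ` (Inr -` ?B))"
    by (rule forest_edges_subset) blast
  then have "forest_edges incL (Inr -` ?B)"
    unfolding forest_edges_def using has_cycle_glue_Inr[of incL _ incH v0 f] by blast
  moreover have "finite EL" and "Inr -` ?B \<subseteq> EL"
    using L unfolding graph_def glue_edges_def by auto
  ultimately obtain B' where B': "Inr -` ?B \<subseteq> B'" "graphic_basis EL incL B'"
    using forest_extends_to_graphic_basis[of EL "Inr -` ?B" incL] by auto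
  have "EL - B' \<subseteq> Inr -` C"
    using B'(1) unfolding glue_edges_def by blast
  with cographic_basis_Diff[OF B'(2)] show ?thesis
    by blast
qed

theorem proposition6p4:
  fixes VH :: "'v set" and EH :: "'e set" and incH :: "'e \<Rightarrow> 'v set" and v0 :: 'v
    and VL :: "'w set" and EL :: "'f set" and incL :: "'f \<Rightarrow> 'w set"
    and f :: "'e \<Rightarrow> 'w"
  assumes "graph VH EH incH" and "loopless EH incH" and "v0 \<in> VH"
    and "graph VL EL incL"
    and "card VL \<ge> card {e \<in> EH. v0 \<in> incH e}"
    and "f ` {e \<in> EH. v0 \<in> incH e} \<subseteq> VL"
    and "inj_on f {e \<in> EH. v0 \<in> incH e}"
    and "bases_intersect (graphic_basis EH incH)"
    and "bases_intersect (cographic_basis EL incL)"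
  shows "bases_intersect (graphic_basis (glue_edges EH EL) (glue_inc incH incL v0 f))
       \<and> bases_intersect (cographic_basis (glue_edges EH EL) (glue_inc incH incL v0 f))"
proof
  show "bases_intersect (graphic_basis (glue_edges EH EL) (glue_inc incH incL v0 f))"
    using assms(8) glue_graphic_basis_contains_graphic_basis[OF assms(1,4,6)]
    by (rule bases_intersect_if_contains_preimage)
  show "bases_intersect (cographic_basis (glue_edges EH EL) (glue_inc incH incL v0 f))"
    using assms(9) glue_cographic_basis_contains_cographic_basis[OF assms(4)]
    by (rule bases_intersect_if_contains_preimage)
qed

end
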